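(* Let $\tau$ be a critical GW tree ($\mu=1$) with offspring distribution $p$ satisfying ( * ). Let $(\alpha_n,n\in\mathbb N)$ be a sequence of positive integers such that for every $j\in\mathbb N^*$, \[\lim_{n\to\infty}\frac{\mathbb P(\mathcal G_{n-j}(\tau)=\alpha_n)}{\mathbb P(\mathcal G_n(\tau)=\alpha_n)}=1.\] Then the conditional law of $\tau$ given $\{\mathcal G_n(\tau)=\alpha_n\}$ converges in distribution to the law of Kesten's tree $\tau^*$ as $n\to\infty$.
   Context: Trees (Neveu formalism): $\mathcal U=\bigcup_{n\ge0}(\mathbb N^* )^n$, $|u|$ the length of $u$. A tree is $\mathbf t\subset\mathcal U$ with $\emptyset\in\mathbf t$, closed under taking prefixes, and such that for every $u\in\mathbf t$ there is $k_u(\mathbf t)\ge0$ with $ui\in\mathbf t\iff1\le i\le k_u(\mathbf t)$. $\mathcal G_n(\mathbf t)=\mathrm{Card}\{u\in\mathbf t:|u|=n\}$ is the size of generation $n$. $r_h(\mathbf t)=\{u\in\mathbf t:|u|\le h\}$; convergence in distribution of random trees $T_n\to T$ means $\mathbb P(r_h(T_n)=\mathbf t)\to\mathbb P(r_h(T)=\mathbf t)$ for all $h$ and $\mathbf t$. Offspring distribution: a probability $p$ on $\mathbb N$ satisfying ( * ): $p(0)>0$, $p(0)+p(1)<1$, $\mu=\sum_n np(n)<\infty$. A GW tree $\tau$ with offspring distribution $p$ satisfies $\mathbb P(r_h(\tau)=\mathbf t)=\prod_{u\in r_{h-1}(\mathbf t)}p(k_u(\mathbf t))$ for all $h\ge1$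 and trees $\mathbf t$ of height $\le h$. Kesten's tree $\tau^*$ (for $\mu\le1$): with $p^*(n)=np(n)/\mu$, $\tau^*$ is a random tree with a random sequence $(V_k)_{k\ge1}$, $V_1\cdots V_h\in\tau^*$ for all $h$, constructed recursively: given $(V_1,\dots,V_h)$ and $r_h(\tau^* )$, the numbers of children of the vertices $v$ with $|v|=h$ are independent, with law $p$ if $v\ne V_1\cdots V_h$ and $p^*$ if $v=V_1\cdots V_h$; then $V_{h+1}$ is uniform on $\{1,\dots,k_{V_1\cdots V_h}(\tau^* )\}$. *)

theory Defs
  imports "HOL-Probability.Probability"
begin

text \<open>Neveu formalism: vertices are finite words over the positive integers,
  represented as lists of naturals all of whose entries are at least 1.
  A tree is a set of such words.\<close>

type_synonym tree = "nat list set"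

definition is_tree :: "tree \<Rightarrow> bool" where
  "is_tree t \<longleftrightarrow>
     [] \<in> t
   \<and> (\<forall>u\<in>t. \<forall>x\<in>set u. 1 \<le> x)
   \<and> (\<forall>u w. u @ w \<in> t \<longrightarrow> u \<in> t)
   \<and> (\<forall>u\<in>t. \<exists>k::nat. \<forall>i. (u @ [i] \<in> t \<longleftrightarrow> 1 \<le> i \<and> i \<le> k))"

definition kids :: "tree \<Rightarrow> nat list \<Rightarrow> nat" where
  "kids t u = card {i. u @ [i] \<in> t}"

definition gen :: "nat \<Rightarrow> tree \<Rightarrow> nat" where
  "gen n t = card {u\<in>t. length u = n}"

definition restr :: "nat \<Rightarrow> tree \<Rightarrow> tree" where
  "restr h t = {u\<in>t. length u \<le> h}"

definition height_le :: "tree \<Rightarrow> nat \<Rightarrow> bool" where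
  "height_le t h \<longleftrightarrow> (\<forall>u\<in>t. length u \<le> h)"

text \<open>Offspring distributions satisfying (*).\<close>
definition offspring_mean :: "(nat \<Rightarrow> real) \<Rightarrow> real" where
  "offspring_mean p = (\<Sum>n. real n * p n)"

definition offspring_dist :: "(nat \<Rightarrow> real) \<Rightarrow> bool" where
  "offspring_dist p \<longleftrightarrow>
     (\<forall>n. 0 \<le> p n) \<and> p sums 1
   \<and> p 0 > 0 \<and> p 0 + p 1 < 1
   \<and> summable (\<lambda>n. real n * p n)"

definition size_biased :: "(nat \<Rightarrow> real) \<Rightarrow> nat \<Rightarrow> real" where
  "size_biased p n = real n * p n / offspring_mean p"

definition is_GW_tree :: "'w measure \<Rightarrow> ('w \<Rightarrow> tree) \<Rightarrow> (nat \<Rightarrow> real) \<Rightarrow> bool" where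
  "is_GW_tree M T p \<longleftrightarrow>
     prob_space M
   \<and> (\<forall>\<omega>\<in>space M. is_tree (T \<omega>))
   \<and> (\<forall>h t. {\<omega>\<in>space M. restr h (T \<omega>) = t} \<in> sets M)
   \<and> (\<forall>n a. {\<omega>\<in>space M. gen n (T \<omega>) = a} \<in> sets M)
   \<and> (\<forall>h t. 1 \<le> h \<longrightarrow> is_tree t \<longrightarrow> height_le t h \<longrightarrow>
        measure M {\<omega>\<in>space M. restr h (T \<omega>) = t}
          = (\<Prod>u\<in>restr (h - 1) t. p (kids t u)))"

text \<open>Kesten's tree (T, V) on the probability space M, with spine
  V_1 V_2 ... (V k for k \<ge> 1).  The recursive construction is encoded by the
  joint law of (r_h(T), V_1 ... V_h) that it produces: a vertex u with |u| < h
  has k_u children with probability p(k_u) if it is off the spine, and with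
  probability p*(k_u) if it is the spine vertex V_1...V_|u|, in which case the
  next spine index V_{|u|+1} is chosen uniformly, i.e. with probability 1/k_u.\<close>
definition spine :: "(nat \<Rightarrow> nat) \<Rightarrow> nat \<Rightarrow> nat list" where
  "spine V h = map V [1..<Suc h]"

definition is_Kesten_tree ::
  "'w measure \<Rightarrow> ('w \<Rightarrow> tree) \<Rightarrow> ('w \<Rightarrow> nat \<Rightarrow> nat) \<Rightarrow> (nat \<Rightarrow> real) \<Rightarrow> bool" where
  "is_Kesten_tree M T V p \<longleftrightarrow>
     prob_space M
   \<and> (\<forall>\<omega>\<in>space M. is_tree (T \<omega>))
   \<and> (\<forall>\<omega>\<in>space M. \<forall>h. spine (V \<omega>) h \<in> T \<omega>)
   \<and> (\<forall>h t. {\<omega>\<in>space M. restr h (T \<omega>) = t} \<in> sets M)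
   \<and> (\<forall>h t v. {\<omega>\<in>space M. restr h (T \<omega>) = t \<and> spine (V \<omega>) h = v} \<in> sets M)
   \<and> (\<forall>h t v. 1 \<le> h \<longrightarrow> is_tree t \<longrightarrow> height_le t h \<longrightarrow> v \<in> t \<longrightarrow> length v = h \<longrightarrow>
        measure M {\<omega>\<in>space M. restr h (T \<omega>) = t \<and> spine (V \<omega>) h = v}
          = (\<Prod>u\<in>restr (h - 1) t.
               if u = take (length u) v
               then size_biased p (kids t u) * (1 / real (kids t u))
               else p (kids t u)))"

end

theory Submission
  imports Defs
begin

text \<open>Given r_h(tau) = t, the size of generation n is that of a Galton-Watson forest with
  k = gen h t roots run for n - h generations. Hence the conditional probability of
  {r_h(tau) = t} equals gw_prob p h t times the ratio P_k(Z_(n-h) = alpha_n) / P_1(Z_n = alpha_n),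
  whereas Kesten's tree gives t the probability k * gw_prob p h t, so it suffices that the ratio
  tends to k. From below: one of the k subtrees reaches alpha_n while the other k - 1 die out,
  critical trees die out almost surely, and the hypothesis absorbs the shift by h. From above:
  by the Markov property at time h, the ratios averaged against the law of Z_h, whose mean is 1,
  are at most 1, which leaves no room for any of them to exceed its lower bound in the limit.\<close>

section \<open>Trees\<close>

lemma tree_Nil: "is_tree t \<Longrightarrow> [] \<in> t"
  by (simp add: is_tree_def)

lemma tree_prefix: "is_tree t \<Longrightarrow> u @ w \<in> t \<Longrightarrow> u \<in> t"
  unfolding is_tree_def by (elim conjE allE impE)

lemma tree_child_iff:
  assumes "is_tree t" "u \<in> t"
  shows "u @ [i] \<in> t \<longleftrightarrow> 1 \<le> i \<and> i \<le> kids t u"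
proof -
  have "\<exists>k::nat. \<forall>i. u @ [i] \<in> t \<longleftrightarrow> 1 \<le> i \<and> i \<le> k"
    using assms unfolding is_tree_def by simp
  then obtain k :: nat where k: "\<And>i. u @ [i] \<in> t \<longleftrightarrow> 1 \<le> i \<and> i \<le> k" by blast
  then have "{i. u @ [i] \<in> t} = {1..k}" by (simp add: set_eq_iff)
  then have "kids t u = k" by (simp add: kids_def)
  with k show ?thesis by simp
qed

lemma tree_parent:
  assumes "is_tree t" "u \<in> t" "u \<noteq> []"
  shows "butlast u \<in> t" "1 \<le> last u" "last u \<le> kids t (butlast u)"
proof -
  have u: "u = butlast u @ [last u]" using assms(3) by simp
  show parent: "butlast u \<in> t" using tree_prefix[OF assms(1)] assms(2) u by metis
  show "1 \<le> last u" "last u \<le> kids t (butlast u)"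
    using tree_child_iff[OF assms(1) parent, of "last u"] assms(2) u by auto
qed

lemma finite_tree_levels:
  assumes "is_tree t"
  shows "finite {u\<in>t. length u \<le> h}"
proof (induction h)
  case 0
  have "{u\<in>t. length u \<le> 0} \<subseteq> {[]}" by auto
  then show ?case by (rule finite_subset) simp
next
  case (Suc h)
  let ?A = "{u\<in>t. length u \<le> h}"
  have "{u\<in>t. length u \<le> Suc h} \<subseteq> ?A \<union> (\<Union>v\<in>?A. (\<lambda>i. v @ [i]) ` {1..kids t v})"
  proof
    fix u assume u: "u \<in> {u\<in>t. length u \<le> Suc h}"
    show "u \<in> ?A \<union> (\<Union>v\<in>?A. (\<lambda>i. v @ [i]) ` {1..kids t v})"
    proof (cases "length u \<le> h")
      case False
      then have "u \<noteq> []" by auto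
      then have "u = butlast u @ [last u]" by simp
      with tree_parent[OF assms _ \<open>u \<noteq> []\<close>] u show ?thesis by force
    qed (use u in auto)
  qed
  moreover have "finite (?A \<union> (\<Union>v\<in>?A. (\<lambda>i. v @ [i]) ` {1..kids t v}))"
    using Suc by auto
  ultimately show ?case by (rule finite_subset)
qed

lemma finite_tree:
  assumes "is_tree t" "height_le t h"
  shows "finite t"
proof -
  have "t = {u\<in>t. length u \<le> h}" using assms(2) by (auto simp: height_le_def)
  then show ?thesis using finite_tree_levels[OF assms(1), of h] by metis
qed

lemma countable_trees: "countable {s. is_tree s \<and> height_le s h}"
proof -
  have "{s. is_tree s \<and> height_le s h} \<subseteq> Collect finite" using finite_tree by auto
  then show ?thesis using countable_Collect_finite countable_subset by blast
qed

lemma is_tree_root: "is_tree {[]}"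
  unfolding is_tree_def by auto

lemma tree_height_0: "is_tree t \<Longrightarrow> height_le t 0 \<Longrightarrow> t = {[]}"
  using tree_Nil by (auto simp: height_le_def)

lemma is_tree_restr:
  assumes "is_tree t" shows "is_tree (restr h t)"
  unfolding is_tree_def
proof (intro conjI)
  show "[] \<in> restr h t" using tree_Nil[OF assms] by (simp add: restr_def)
  show "\<forall>u\<in>restr h t. \<forall>x\<in>set u. 1 \<le> x" "\<forall>u w. u @ w \<in> restr h t \<longrightarrow> u \<in> restr h t"
    using assms by (auto simp: restr_def is_tree_def)
  show "\<forall>u\<in>restr h t. \<exists>k. \<forall>i. (u @ [i] \<in> restr h t) = (1 \<le> i \<and> i \<le> k)"
  proof
    fix u assume u: "u \<in> restr h t"
    show "\<exists>k. \<forall>i. (u @ [i] \<in> restr h t) = (1 \<le> i \<and> i \<le> k)"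
    proof (cases "length u < h")
      case True
      then show ?thesis using u tree_child_iff[OF assms] by (auto simp: restr_def)
    next
      case False
      then show ?thesis using u by (intro exI[of _ 0]) (auto simp: restr_def)
    qed
  qed
qed

lemma height_le_restr: "height_le (restr h t) h"
  by (auto simp: restr_def height_le_def)

lemma restr_restr: "h \<le> h' \<Longrightarrow> restr h (restr h' t) = restr h t"
  unfolding restr_def by auto

lemma restr_0: "is_tree t \<Longrightarrow> restr 0 t = {[]}"
  using tree_Nil by (auto simp: restr_def)

lemma gen_restr: "n \<le> h \<Longrightarrow> gen n (restr h t) = gen n t"
  unfolding gen_def restr_def by (rule arg_cong[where f=card]) auto

lemma gen_0_root: "gen 0 {[]} = 1"
  by (simp add: gen_def)

section \<open>Adding a generation to a tree\<close>

definition gw_prob :: "(nat \<Rightarrow> real) \<Rightarrow> nat \<Rightarrow> tree \<Rightarrow> real" where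
  "gw_prob p h t = (\<Prod>u\<in>{u\<in>t. length u < h}. p (kids t u))"

lemma gw_prob_nonneg: "offspring_dist p \<Longrightarrow> 0 \<le> gw_prob p h t"
  unfolding gw_prob_def offspring_dist_def by (intro prod_nonneg) auto

lemma gw_prob_0 [simp]: "gw_prob p 0 t = 1"
  by (simp add: gw_prob_def)

definition graft :: "tree \<Rightarrow> nat \<Rightarrow> (nat list \<Rightarrow> nat) \<Rightarrow> tree" where
  "graft t h c = t \<union> {v @ [i] | v i. v \<in> t \<and> length v = h \<and> 1 \<le> i \<and> i \<le> c v}"

context
  fixes t h
  assumes tree: "is_tree t" and height: "height_le t h"
begin

abbreviation top_gen where "top_gen \<equiv> {v\<in>t. length v = h}"

lemma length_le_height: "u \<in> t \<Longrightarrow> length u \<le> h"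
  using height by (auto simp: height_le_def)

lemma finite_top_gen: "finite top_gen"
  using finite_tree[OF tree height] by simp

lemma kids_graft_top_gen: "v \<in> top_gen \<Longrightarrow> kids (graft t h c) v = c v"
proof -
  assume v: "v \<in> top_gen"
  then have "{i. v @ [i] \<in> graft t h c} = {1..c v}"
    using length_le_height[of "v @ [_]"] by (auto simp: graft_def)
  then show ?thesis by (simp add: kids_def)
qed

lemma kids_graft_inner: "u \<in> t \<Longrightarrow> length u < h \<Longrightarrow> kids (graft t h c) u = kids t u"
proof -
  assume u: "u \<in> t" "length u < h"
  then have "{i. u @ [i] \<in> graft t h c} = {i. u @ [i] \<in> t}"
    by (auto simp: graft_def)
  then show ?thesis by (simp add: kids_def)
qed

lemma graft_prefix: "u @ w \<in> graft t h c \<Longrightarrow> u \<in> graft t h c"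
proof (cases "u @ w \<in> t \<or> w = []")
  case True
  then show "u @ w \<in> graft t h c \<Longrightarrow> u \<in> graft t h c"
    using tree_prefix[OF tree] by (auto simp: graft_def)
next
  case False
  assume "u @ w \<in> graft t h c"
  then obtain v i where "u @ w = v @ [i]" "v \<in> t"
    using False by (auto simp: graft_def)
  moreover have "w = butlast w @ [last w]" using False by simp
  ultimately have "u @ butlast w \<in> t" by (metis append.assoc butlast_snoc)
  then show ?thesis using tree_prefix[OF tree] by (auto simp: graft_def)
qed

lemma is_tree_graft: "is_tree (graft t h c)"
  unfolding is_tree_def
proof (intro conjI allI impI ballI)
  show "[] \<in> graft t h c" using tree_Nil[OF tree] by (simp add: graft_def)
  show "\<And>u x. u \<in> graft t h c \<Longrightarrow> x \<in> set u \<Longrightarrow> 1 \<le> x"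
    using tree by (auto simp: graft_def is_tree_def)
  show "\<And>u w. u @ w \<in> graft t h c \<Longrightarrow> u \<in> graft t h c" by (rule graft_prefix)
  fix u assume u: "u \<in> graft t h c"
  consider "u \<in> t" "length u < h" | "u \<in> top_gen" | "u \<notin> t"
    using length_le_height by fastforce
  then show "\<exists>k. \<forall>i. (u @ [i] \<in> graft t h c) = (1 \<le> i \<and> i \<le> k)"
  proof cases
    case 1
    then have "\<And>i. u @ [i] \<in> graft t h c \<longleftrightarrow> u @ [i] \<in> t" by (auto simp: graft_def)
    then show ?thesis using tree_child_iff[OF tree 1(1)] by auto
  next
    case 2
    then have "\<And>i. u @ [i] \<in> graft t h c \<longleftrightarrow> 1 \<le> i \<and> i \<le> c u"
      using length_le_height[of "u @ [_]"] by (auto simp: graft_def)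
    then show ?thesis by blast
  next
    case 3
    then have "\<And>i. u @ [i] \<notin> graft t h c"
      using u by (auto simp: graft_def dest: length_le_height)
    then show ?thesis by (intro exI[of _ 0]) auto
  qed
qed

lemma height_le_graft: "height_le (graft t h c) (Suc h)"
  by (auto simp: height_le_def graft_def dest: length_le_height)

lemma restr_graft: "restr h (graft t h c) = t"
  using length_le_height by (auto simp: restr_def graft_def)

lemma gen_graft: "gen (Suc h) (graft t h c) = (\<Sum>v\<in>top_gen. c v)"
proof -
  have "{u\<in>graft t h c. length u = Suc h} = (\<Union>v\<in>top_gen. (\<lambda>i. v @ [i]) ` {1..c v})"
    by (auto simp: graft_def dest: length_le_height)
  then have "gen (Suc h) (graft t h c) = card (\<Union>v\<in>top_gen. (\<lambda>i. v @ [i]) ` {1..c v})"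
    by (simp add: gen_def)
  also have "\<dots> = (\<Sum>v\<in>top_gen. card ((\<lambda>i. v @ [i]) ` {1..c v}))"
    using finite_top_gen by (intro card_UN_disjoint) auto
  also have "\<dots> = (\<Sum>v\<in>top_gen. c v)"
    by (intro sum.cong refl) (simp add: card_image inj_on_def)
  finally show ?thesis .
qed

lemma gw_prob_graft: "gw_prob p (Suc h) (graft t h c) = gw_prob p h t * (\<Prod>v\<in>top_gen. p (c v))"
proof -
  have inner: "{u\<in>graft t h c. length u < Suc h} = {u\<in>t. length u < h} \<union> top_gen"
    using length_le_height by (auto simp: graft_def)
  have "gw_prob p (Suc h) (graft t h c)
      = (\<Prod>u\<in>{u\<in>t. length u < h}. p (kids (graft t h c) u)) * (\<Prod>u\<in>top_gen. p (kids (graft t h c) u))"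
    unfolding gw_prob_def inner using finite_tree[OF tree height] by (intro prod.union_disjoint) auto
  also have "\<dots> = gw_prob p h t * (\<Prod>v\<in>top_gen. p (c v))"
    unfolding gw_prob_def using kids_graft_inner kids_graft_top_gen
    by (intro arg_cong2[where f="(*)"] prod.cong) auto
  finally show ?thesis .
qed

lemma graft_kids:
  assumes s: "is_tree s" "height_le s (Suc h)" "restr h s = t"
  shows "graft t h (\<lambda>v. if v \<in> top_gen then kids s v else 0) = s"
proof (intro equalityI subsetI)
  fix u assume "u \<in> graft t h (\<lambda>v. if v \<in> top_gen then kids s v else 0)"
  then consider "u \<in> t" | v i where "u = v @ [i]" "v \<in> top_gen" "1 \<le> i" "i \<le> kids s v"
    by (auto simp: graft_def split: if_splits)
  then show "u \<in> s"
  proof cases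
    case 1
    then show ?thesis using s(3) by (auto simp: restr_def)
  next
    case 2
    then have "v \<in> s" using s(3) by (auto simp: restr_def)
    then show ?thesis using tree_child_iff[OF s(1) \<open>v \<in> s\<close>] 2 by auto
  qed
next
  fix u assume u: "u \<in> s"
  show "u \<in> graft t h (\<lambda>v. if v \<in> top_gen then kids s v else 0)"
  proof (cases "length u \<le> h")
    case True
    then show ?thesis using u s(3) by (auto simp: graft_def restr_def)
  next
    case False
    then have "length u = Suc h" and "u \<noteq> []"
      using s(2) u by (auto simp: height_le_def)
    then have "u = butlast u @ [last u]" "butlast u \<in> top_gen"
      using tree_parent[OF s(1) u] s(3) by (auto simp: restr_def)
    then show ?thesis
      using tree_parent[OF s(1) u \<open>u \<noteq> []\<close>] unfolding graft_def by auto
  qed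
qed

lemma bij_betw_graft:
  "bij_betw (graft t h) {c. \<forall>v. v \<notin> top_gen \<longrightarrow> c v = 0}
     {s. is_tree s \<and> height_le s (Suc h) \<and> restr h s = t}"
proof (rule bij_betw_byWitness[where f' = "\<lambda>s v. if v \<in> top_gen then kids s v else 0"])
  show "\<forall>c\<in>{c. \<forall>v. v \<notin> top_gen \<longrightarrow> c v = 0}.
          (\<lambda>v. if v \<in> top_gen then kids (graft t h c) v else 0) = c"
    using kids_graft_top_gen by auto
  show "\<forall>s\<in>{s. is_tree s \<and> height_le s (Suc h) \<and> restr h s = t}.
          graft t h (\<lambda>v. if v \<in> top_gen then kids s v else 0) = s"
    using graft_kids by auto
  show "graft t h ` {c. \<forall>v. v \<notin> top_gen \<longrightarrow> c v = 0}
          \<subseteq> {s. is_tree s \<and> height_le s (Suc h) \<and> restr h s = t}"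
    using is_tree_graft height_le_graft restr_graft by auto
  show "(\<lambda>s v. if v \<in> top_gen then kids s v else 0) ` {s. is_tree s \<and> height_le s (Suc h) \<and> restr h s = t}
          \<subseteq> {c. \<forall>v. v \<notin> top_gen \<longrightarrow> c v = 0}"
    by auto
qed

end

section \<open>Generation sizes of a Galton-Watson process\<close>

definition conv_pmf :: "nat pmf \<Rightarrow> nat pmf \<Rightarrow> nat pmf" where
  "conv_pmf X Y = bind_pmf X (\<lambda>x. bind_pmf Y (\<lambda>y. return_pmf (x + y)))"

fun conv_pow :: "nat pmf \<Rightarrow> nat \<Rightarrow> nat pmf" where
  "conv_pow P 0 = return_pmf 0"
| "conv_pow P (Suc k) = conv_pmf P (conv_pow P k)"

fun gw_pmf :: "nat pmf \<Rightarrow> nat \<Rightarrow> nat \<Rightarrow> nat pmf" where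
  "gw_pmf P 0 k = return_pmf k"
| "gw_pmf P (Suc m) k = bind_pmf (conv_pow P k) (gw_pmf P m)"

lemma conv_pmf_altdef: "conv_pmf X Y = map_pmf (\<lambda>(x, y). x + y) (pair_pmf X Y)"
  by (simp add: conv_pmf_def map_pmf_def pair_pmf_def bind_assoc_pmf bind_return_pmf)

lemma conv_pmf_return_0 [simp]: "conv_pmf (return_pmf 0) X = X"
  by (simp add: conv_pmf_def bind_return_pmf bind_return_pmf')

lemma conv_pmf_return: "conv_pmf (return_pmf a) (return_pmf b) = return_pmf (a + b)"
  by (simp add: conv_pmf_def bind_return_pmf)

lemma conv_pmf_assoc: "conv_pmf (conv_pmf X Y) Z = conv_pmf X (conv_pmf Y Z)"
  by (simp add: conv_pmf_def bind_assoc_pmf bind_return_pmf add.assoc)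

lemma bind_conv_pmf: "bind_pmf (conv_pmf X Y) F = bind_pmf X (\<lambda>x. bind_pmf Y (\<lambda>y. F (x + y)))"
  by (simp add: conv_pmf_def bind_assoc_pmf bind_return_pmf)

lemma conv_pmf_bind_bind:
  "conv_pmf (bind_pmf A F) (bind_pmf B G) = bind_pmf A (\<lambda>x. bind_pmf B (\<lambda>y. conv_pmf (F x) (G y)))"
proof -
  have "conv_pmf (bind_pmf A F) (bind_pmf B G) =
     bind_pmf A (\<lambda>x. bind_pmf (F x) (\<lambda>a. bind_pmf B (\<lambda>y. bind_pmf (G y) (\<lambda>b. return_pmf (a + b)))))"
    by (simp add: conv_pmf_def bind_assoc_pmf)
  also have "\<dots> = bind_pmf A (\<lambda>x. bind_pmf B (\<lambda>y. bind_pmf (F x) (\<lambda>a. bind_pmf (G y) (\<lambda>b. return_pmf (a + b)))))"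
    by (intro bind_pmf_cong refl) (rule bind_commute_pmf)
  finally show ?thesis by (simp add: conv_pmf_def)
qed

lemma pmf_conv_pmf_0: "pmf (conv_pmf X Y) 0 = pmf X 0 * pmf Y 0"
proof -
  have "(\<lambda>(x, y). x + y) -` {0::nat} = {(0, 0)}" by auto
  then show ?thesis by (simp add: conv_pmf_altdef pmf_map measure_pmf_single pmf_pair)
qed

lemma pmf_conv_pmf_ge:
  assumes "a \<noteq> 0"
  shows "pmf X a * pmf Y 0 + pmf X 0 * pmf Y a \<le> pmf (conv_pmf X Y) a"
proof -
  have "measure (pair_pmf X Y) {(a, 0), (0, a)} \<le> measure (pair_pmf X Y) ((\<lambda>(x, y). x + y) -` {a})"
    by (intro measure_pmf.finite_measure_mono) auto
  moreover have "measure (pair_pmf X Y) {(a, 0), (0, a)} = pmf X a * pmf Y 0 + pmf X 0 * pmf Y a"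
    using assms by (subst measure_measure_pmf_finite) (auto simp: pmf_pair)
  ultimately show ?thesis by (simp add: conv_pmf_altdef pmf_map)
qed

lemma nn_integral_conv_pmf:
  "(\<integral>\<^sup>+x. real x \<partial>conv_pmf X Y) = (\<integral>\<^sup>+x. real x \<partial>X) + (\<integral>\<^sup>+y. real y \<partial>Y)"
proof -
  have "(\<integral>\<^sup>+x. real x \<partial>conv_pmf X Y) = (\<integral>\<^sup>+x. (\<integral>\<^sup>+y. ennreal (real x) + ennreal (real y) \<partial>Y) \<partial>X)"
    by (simp add: conv_pmf_def ennreal_plus[symmetric] del: ennreal_plus)
  also have "\<dots> = (\<integral>\<^sup>+x. ennreal (real x) + (\<integral>\<^sup>+y. real y \<partial>Y) \<partial>X)"
    by (intro nn_integral_cong) (simp add: nn_integral_add measure_pmf.emeasure_space_1)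
  finally show ?thesis by (simp add: nn_integral_add)
qed

lemma conv_pow_add: "conv_pow P (j + k) = conv_pmf (conv_pow P j) (conv_pow P k)"
  by (induction j) (simp_all add: conv_pmf_assoc)

lemma map_sum_Pi_pmf:
  assumes "finite A"
  shows "map_pmf (\<lambda>c. \<Sum>v\<in>A. c v) (Pi_pmf A 0 (\<lambda>_. P)) = conv_pow P (card A)"
  using assms
proof (induction A rule: finite_induct)
  case (insert x F)
  have "map_pmf (\<lambda>c. \<Sum>v\<in>insert x F. c v) (Pi_pmf (insert x F) 0 (\<lambda>_. P))
      = map_pmf (\<lambda>(y, f). \<Sum>v\<in>insert x F. (f(x := y)) v) (pair_pmf P (Pi_pmf F 0 (\<lambda>_. P)))"
    using insert by (simp add: Pi_pmf_insert map_pmf_comp case_prod_beta')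
  also have "\<dots> = map_pmf (\<lambda>(y, f). y + (\<Sum>v\<in>F. f v)) (pair_pmf P (Pi_pmf F 0 (\<lambda>_. P)))"
    using insert by (intro map_pmf_cong refl) (auto intro!: sum.cong)
  also have "\<dots> = conv_pmf P (map_pmf (\<lambda>c. \<Sum>v\<in>F. c v) (Pi_pmf F 0 (\<lambda>_. P)))"
    by (simp add: conv_pmf_altdef pair_map_pmf2 map_pmf_comp case_prod_beta')
  finally show ?case using insert by simp
qed simp

lemma gw_pmf_add: "gw_pmf P m (j + k) = conv_pmf (gw_pmf P m j) (gw_pmf P m k)"
proof (induction m arbitrary: j k)
  case 0
  then show ?case by (simp add: conv_pmf_return)
next
  case (Suc m)
  have "gw_pmf P (Suc m) (j + k) = bind_pmf (conv_pmf (conv_pow P j) (conv_pow P k)) (gw_pmf P m)"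
    by (simp add: conv_pow_add)
  also have "\<dots> = conv_pmf (gw_pmf P (Suc m) j) (gw_pmf P (Suc m) k)"
    by (simp add: bind_conv_pmf Suc conv_pmf_bind_bind)
  finally show ?case .
qed

lemma gw_pmf_Suc_ancestors: "gw_pmf P m (Suc k) = conv_pmf (gw_pmf P m k) (gw_pmf P m 1)"
  using gw_pmf_add[of P m k 1] by simp

lemma gw_pmf_plus: "gw_pmf P (h + m) k = bind_pmf (gw_pmf P h k) (gw_pmf P m)"
proof (induction h arbitrary: k)
  case (Suc h)
  have "gw_pmf P (Suc h + m) k = bind_pmf (conv_pow P k) (\<lambda>x. gw_pmf P (h + m) x)" by simp
  then show ?case by (simp add: Suc.IH bind_assoc_pmf)
qed (simp add: bind_return_pmf)

lemma gw_pmf_0_ancestors: "gw_pmf P m 0 = return_pmf 0"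
  by (induction m) (simp_all add: bind_return_pmf)

lemma pmf_gw_pmf_0: "pmf (gw_pmf P m k) 0 = pmf (gw_pmf P m 1) 0 ^ k"
proof (induction k)
  case (Suc k)
  then show ?case by (simp add: gw_pmf_Suc_ancestors[of P m k] pmf_conv_pmf_0)
qed (simp add: gw_pmf_0_ancestors)

text \<open>One of the k lines reaches a while the other k - 1 die out.\<close>

lemma pmf_gw_pmf_lower:
  assumes "a \<noteq> 0"
  shows "real k * pmf (gw_pmf P m 1) a * pmf (gw_pmf P m 1) 0 ^ (k - 1) \<le> pmf (gw_pmf P m k) a"
proof (induction k)
  case (Suc k)
  let ?g = "pmf (gw_pmf P m 1) a" and ?z = "pmf (gw_pmf P m 1) 0"
  have "real (Suc k) * ?g * ?z ^ (Suc k - 1) = real k * ?g * ?z ^ (k - 1) * ?z + ?z ^ k * ?g"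
    by (cases k) (simp_all add: algebra_simps)
  also have "\<dots> \<le> pmf (gw_pmf P m k) a * ?z + pmf (gw_pmf P m k) 0 * ?g"
    using mult_right_mono[OF Suc.IH, of ?z] by (simp add: pmf_gw_pmf_0[of P m k])
  also have "\<dots> \<le> pmf (gw_pmf P m (Suc k)) a"
    unfolding gw_pmf_Suc_ancestors[of P m k] by (rule pmf_conv_pmf_ge[OF assms])
  finally show ?case .
qed simp

lemma nn_integral_gw_pmf:
  fixes P :: "nat pmf"
  assumes "(\<integral>\<^sup>+x. real x \<partial>P) = 1"
  shows "(\<integral>\<^sup>+x. real x \<partial>gw_pmf P m k) = real k"
proof -
  have conv_pow_mean: "(\<integral>\<^sup>+x. real x \<partial>conv_pow P k) = real k" for k
    by (induction k) (simp_all add: nn_integral_conv_pmf assms)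
  show ?thesis
    by (induction m arbitrary: k) (simp_all add: conv_pow_mean)
qed

section \<open>Extinction of critical processes\<close>

definition pgf :: "nat pmf \<Rightarrow> real \<Rightarrow> real" where
  "pgf P s = measure_pmf.expectation P (\<lambda>c. s ^ c)"

lemma integrable_power_pmf: "0 \<le> s \<Longrightarrow> s \<le> 1 \<Longrightarrow> integrable (measure_pmf P) (\<lambda>c. s ^ c)"
  for s :: real by (intro measure_pmf.integrable_const_bound[where B=1]) (auto simp: power_le_one)

lemma pgf_mono: "0 \<le> s \<Longrightarrow> s \<le> t \<Longrightarrow> t \<le> 1 \<Longrightarrow> pgf P s \<le> pgf P t"
  unfolding pgf_def by (intro integral_mono integrable_power_pmf power_mono) auto

lemma tendsto_pgf:
  assumes "z \<longlonglongrightarrow> q" "\<And>m. 0 \<le> z m" "\<And>m. z m \<le> 1"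
  shows "(\<lambda>m. pgf P (z m)) \<longlonglongrightarrow> pgf P q"
  unfolding pgf_def
proof (rule integral_dominated_convergence[where w="\<lambda>_. 1"])
  show "AE c in measure_pmf P. (\<lambda>m. z m ^ c) \<longlonglongrightarrow> q ^ c"
    using assms(1) by (intro AE_I2 tendsto_power)
  show "\<And>m. AE c in measure_pmf P. norm (z m ^ c) \<le> 1"
    using assms(2,3) by (intro AE_I2) (simp add: power_le_one)
qed auto

lemma conv_pow_1: "conv_pow P 1 = P"
  by (simp add: conv_pmf_def bind_return_pmf bind_return_pmf')

lemma pmf_gw_pmf_Suc_0: "pmf (gw_pmf P (Suc m) 1) 0 = pgf P (pmf (gw_pmf P m 1) 0)"
  unfolding pgf_def gw_pmf.simps(2) conv_pow_1 pmf_bind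
  by (intro Bochner_Integration.integral_cong refl) (rule pmf_gw_pmf_0)

lemma power_ge_quadratic:
  fixes q :: real
  assumes "0 \<le> q" "q \<le> 1"
  shows "1 - real c * (1 - q) + (if 2 \<le> c then (1 - q)^2 else 0) \<le> q ^ c"
proof (induction c)
  case (Suc c)
  let ?d = "1 - q"
  show ?case
  proof (cases "c \<le> 1")
    case True
    then consider "c = 0" | "c = 1" by linarith
    then show ?thesis by cases (simp_all add: power2_eq_square algebra_simps)
  next
    case False
    then have IH: "1 - real c * ?d + ?d^2 \<le> q ^ c" using Suc by simp
    have "1 - real (Suc c) * ?d + ?d^2 = q * (1 - real c * ?d + ?d^2) - ?d^2 * (real c - ?d)"
      by (simp add: power2_eq_square algebra_simps)
    also have "\<dots> \<le> q * (1 - real c * ?d + ?d^2)"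
      using assms False by simp
    also have "\<dots> \<le> q * q ^ c"
      using IH assms by (intro mult_left_mono) auto
    finally show ?thesis using False by simp
  qed
qed simp

text \<open>The quadratic term of power_ge_quadratic carries the mass of {c. 2 \<le> c}, which is positive
  by non-degeneracy.\<close>

lemma pgf_gt_self:
  fixes P :: "nat pmf"
  assumes mean: "(\<integral>\<^sup>+x. real x \<partial>P) = 1" and nondeg: "pmf P 0 + pmf P 1 < 1"
    and q: "0 \<le> q" "q < 1"
  shows "q < pgf P q"
proof -
  define d where "d = 1 - q"
  define A where "A = {c::nat. 2 \<le> c}"
  have d: "0 < d" "d \<le> 1" using q by (auto simp: d_def)
  have int_id: "integrable (measure_pmf P) real"
    by (rule integrableI_nonneg) (auto simp: mean)
  have mean_id: "measure_pmf.expectation P real = 1"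
    using nn_integral_eq_integral[OF int_id] mean by simp
  have int_A: "integrable (measure_pmf P) (indicator A :: nat \<Rightarrow> real)"
    by (intro measure_pmf.integrable_const_bound[where B=1]) (auto simp: indicator_def)
  have "A = UNIV - {0, 1}" by (auto simp: A_def)
  then have "measure_pmf.prob P A = 1 - measure_pmf.prob P {0, 1}"
    using measure_pmf.prob_compl[of "{0, 1}" P] by simp
  also have "measure_pmf.prob P {0, 1} = pmf P 0 + pmf P 1"
    by (subst measure_measure_pmf_finite) auto
  finally have prob_A: "measure_pmf.prob P A = 1 - (pmf P 0 + pmf P 1)" .
  have "q < 1 - d + d^2 * (1 - (pmf P 0 + pmf P 1))"
    using d nondeg by (simp add: d_def)
  also have "\<dots> = measure_pmf.expectation P (\<lambda>c. 1 - real c * d + d^2 * indicator A c)"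
    using int_id int_A by (simp add: mean_id prob_A)
  also have "\<dots> \<le> pgf P q"
    unfolding pgf_def
  proof (rule integral_mono)
    show "integrable (measure_pmf P) (\<lambda>c. 1 - real c * d + d^2 * indicator A c)"
      using int_id int_A by auto
    show "integrable (measure_pmf P) (\<lambda>c. q ^ c)" using q by (intro integrable_power_pmf) auto
    show "1 - real c * d + d^2 * indicator A c \<le> q ^ c" for c
      using power_ge_quadratic[of q c] q by (auto simp: d_def A_def indicator_def)
  qed
  finally show ?thesis .
qed

text \<open>The extinction probabilities z m increase to the least fixed point of the generating
  function on [0, 1], which is 1 by the previous lemma.\<close>

lemma gw_extinction:
  fixes P :: "nat pmf"
  assumes mean: "(\<integral>\<^sup>+x. real x \<partial>P) = 1" and nondeg: "pmf P 0 + pmf P 1 < 1"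
  shows "(\<lambda>m. pmf (gw_pmf P m 1) 0) \<longlonglongrightarrow> 1"
proof -
  define z where "z m = pmf (gw_pmf P m 1) 0" for m
  have z_Suc: "z (Suc m) = pgf P (z m)" for m
    unfolding z_def by (rule pmf_gw_pmf_Suc_0)
  have z01: "0 \<le> z m" "z m \<le> 1" for m
    unfolding z_def by (simp_all add: pmf_le_1)
  have "z m \<le> z (Suc m)" for m
  proof (induction m)
    case 0
    then show ?case using z01[of 1] by (simp add: z_def)
  next
    case (Suc m)
    have "pgf P (z m) \<le> pgf P (z (Suc m))" using Suc z01 by (intro pgf_mono) auto
    then show ?case by (simp only: z_Suc)
  qed
  then have "incseq z" by (rule incseq_SucI)
  then obtain q where zq: "z \<longlonglongrightarrow> q"
    using z01 by (meson incseq_convergent bdd_aboveI2 LIMSEQ_incseq_SUP)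
  have q01: "0 \<le> q" "q \<le> 1"
    using LIMSEQ_le_const[OF zq, of 0] LIMSEQ_le_const2[OF zq, of 1] z01 by auto
  have "(\<lambda>m. z (Suc m)) \<longlonglongrightarrow> pgf P q"
    unfolding z_Suc using zq z01 by (rule tendsto_pgf)
  then have "pgf P q = q"
    using LIMSEQ_Suc[OF zq] LIMSEQ_unique by blast
  then have "q = 1"
    using pgf_gt_self[OF mean nondeg q01(1)] q01(2) by fastforce
  then show ?thesis using zq by (simp add: z_def[abs_def])
qed

section \<open>Laws of the Galton-Watson tree and of Kesten's tree\<close>

definition offspring_pmf :: "(nat \<Rightarrow> real) \<Rightarrow> nat pmf" where
  "offspring_pmf p = embed_pmf p"

lemma pmf_offspring_pmf:
  assumes "offspring_dist p"
  shows "pmf (offspring_pmf p) n = p n"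
proof -
  have nonneg: "\<And>n. 0 \<le> p n" and sums: "p sums 1" using assms by (auto simp: offspring_dist_def)
  have "(\<integral>\<^sup>+x. ennreal (p x) \<partial>count_space UNIV) = 1"
    using suminf_ennreal_eq[OF nonneg sums] by (simp add: nn_integral_count_space_nat)
  then show ?thesis unfolding offspring_pmf_def by (intro pmf_embed_pmf nonneg)
qed

lemma nn_integral_offspring_pmf:
  assumes od: "offspring_dist p" and mean: "offspring_mean p = 1"
  shows "(\<integral>\<^sup>+x. real x \<partial>offspring_pmf p) = 1"
proof -
  have nonneg: "\<And>n. 0 \<le> real n * p n" and "summable (\<lambda>n. real n * p n)"
    using od by (auto simp: offspring_dist_def)
  then have "(\<lambda>n. real n * p n) sums 1"
    using mean by (simp add: offspring_mean_def summable_sums_iff)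
  then have "(\<integral>\<^sup>+x. ennreal (real x * p x) \<partial>count_space UNIV) = 1"
    using suminf_ennreal_eq[OF nonneg] by (simp add: nn_integral_count_space_nat)
  then show ?thesis
    unfolding nn_integral_measure_pmf pmf_offspring_pmf[OF od]
    using od by (simp add: offspring_dist_def ennreal_mult' mult.commute)
qed

lemma is_GW_treeD:
  assumes "is_GW_tree M T p"
  shows "prob_space M" "\<And>\<omega>. \<omega> \<in> space M \<Longrightarrow> is_tree (T \<omega>)"
    "\<And>h t. {\<omega>\<in>space M. restr h (T \<omega>) = t} \<in> sets M"
    "\<And>n a. {\<omega>\<in>space M. gen n (T \<omega>) = a} \<in> sets M"
  using assms unfolding is_GW_tree_def by simp_all

lemma measure_restr_GW:
  assumes gw: "is_GW_tree M T p" and tree: "is_tree t" and height: "height_le t h"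
  shows "measure M {\<omega>\<in>space M. restr h (T \<omega>) = t} = gw_prob p h t"
proof (cases h)
  case 0
  interpret prob_space M using is_GW_treeD(1)[OF gw] .
  have "{\<omega>\<in>space M. restr h (T \<omega>) = t} = space M"
    using restr_0 is_GW_treeD(2)[OF gw] tree_height_0[OF tree] height 0 by auto
  then show ?thesis using 0 by (simp add: prob_space)
next
  case (Suc h')
  then have "{u\<in>t. length u < h} = restr (h - 1) t" by (auto simp: restr_def)
  then show ?thesis using gw tree height Suc by (simp add: gw_prob_def is_GW_tree_def)
qed

lemma emeasure_restr_gen_split:
  assumes gw: "is_GW_tree M T p"
  shows "emeasure M {\<omega>\<in>space M. restr h (T \<omega>) = t \<and> gen n (T \<omega>) = a}
    = (\<integral>\<^sup>+s. emeasure M {\<omega>\<in>space M. restr (Suc h) (T \<omega>) = s \<and> gen n (T \<omega>) = a}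
         \<partial>count_space {s. is_tree s \<and> height_le s (Suc h) \<and> restr h s = t})"
proof -
  let ?S = "{s. is_tree s \<and> height_le s (Suc h) \<and> restr h s = t}"
  let ?X = "\<lambda>s. {\<omega>\<in>space M. restr (Suc h) (T \<omega>) = s \<and> gen n (T \<omega>) = a}"
  have "{\<omega>\<in>space M. restr h (T \<omega>) = t \<and> gen n (T \<omega>) = a} = (\<Union>s\<in>?S. ?X s)"
  proof (intro equalityI subsetI)
    fix \<omega> assume \<omega>: "\<omega> \<in> {\<omega>\<in>space M. restr h (T \<omega>) = t \<and> gen n (T \<omega>) = a}"
    then have "restr (Suc h) (T \<omega>) \<in> ?S"
      using is_tree_restr is_GW_treeD(2)[OF gw] height_le_restr restr_restr[of h "Suc h"] by auto
    then show "\<omega> \<in> (\<Union>s\<in>?S. ?X s)" using \<omega> by auto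
  qed (use restr_restr[of h "Suc h"] in auto)
  also have "emeasure M (\<Union>s\<in>?S. ?X s) = (\<integral>\<^sup>+s. emeasure M (?X s) \<partial>count_space ?S)"
  proof (rule emeasure_UN_countable)
    show "\<And>s. s \<in> ?S \<Longrightarrow> ?X s \<in> sets M"
      using is_GW_treeD(3,4)[OF gw] by (auto intro: sets.Int[simplified Int_def])
    show "countable ?S" by (rule countable_subset[OF _ countable_trees[of "Suc h"]]) auto
    show "disjoint_family_on ?X ?S" by (auto simp: disjoint_family_on_def)
  qed
  finally show ?thesis .
qed

text \<open>Branching property at level h: given the first h generations t, the numbers of children of
  the vertices of generation h are independent with law p.\<close>

lemma nn_integral_extensions:
  assumes od: "offspring_dist p" and tree: "is_tree t" and height: "height_le t h"
  shows "(\<integral>\<^sup>+s. ennreal (gw_prob p (Suc h) s) * F (gen (Suc h) s)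
            \<partial>count_space {s. is_tree s \<and> height_le s (Suc h) \<and> restr h s = t})
    = ennreal (gw_prob p h t) * (\<integral>\<^sup>+k. F k \<partial>conv_pow (offspring_pmf p) (gen h t))"
proof -
  let ?L = "{v\<in>t. length v = h}"
  let ?C = "{c. \<forall>v. v \<notin> ?L \<longrightarrow> c v = 0}"
  let ?Pi = "Pi_pmf ?L 0 (\<lambda>_. offspring_pmf p)"
  have finL: "finite ?L" using finite_tree[OF tree height] by simp
  have pmf_Pi_C: "pmf ?Pi c = (\<Prod>v\<in>?L. p (c v))" if "c \<in> ?C" for c
    using that finL by (simp add: pmf_Pi pmf_offspring_pmf[OF od])
  have nonneg: "0 \<le> p n" for n using od by (simp add: offspring_dist_def)
  have "(\<integral>\<^sup>+s. ennreal (gw_prob p (Suc h) s) * F (gen (Suc h) s)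
            \<partial>count_space {s. is_tree s \<and> height_le s (Suc h) \<and> restr h s = t})
      = (\<integral>\<^sup>+c. ennreal (gw_prob p (Suc h) (graft t h c)) * F (gen (Suc h) (graft t h c)) \<partial>count_space ?C)"
    by (rule nn_integral_bij_count_space[OF bij_betw_graft[OF tree height], symmetric])
  also have "\<dots> = (\<integral>\<^sup>+c. ennreal (gw_prob p h t) * (ennreal (pmf ?Pi c) * F (\<Sum>v\<in>?L. c v)) \<partial>count_space ?C)"
    using gw_prob_graft[OF tree height] gen_graft[OF tree height] gw_prob_nonneg[OF od, of h t]
    by (intro nn_integral_cong) (simp add: pmf_Pi_C ennreal_mult prod_nonneg nonneg mult.assoc)
  also have "\<dots> = ennreal (gw_prob p h t) * (\<integral>\<^sup>+c. ennreal (pmf ?Pi c) * F (\<Sum>v\<in>?L. c v) \<partial>count_space ?C)"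
    by (rule nn_integral_cmult) simp
  also have "(\<integral>\<^sup>+c. ennreal (pmf ?Pi c) * F (\<Sum>v\<in>?L. c v) \<partial>count_space ?C)
      = (\<integral>\<^sup>+c. F (\<Sum>v\<in>?L. c v) \<partial>?Pi)"
    using finL unfolding nn_integral_measure_pmf
    by (subst nn_integral_count_space_indicator) (auto intro!: nn_integral_cong simp: pmf_Pi indicator_def)
  also have "\<dots> = (\<integral>\<^sup>+k. F k \<partial>map_pmf (\<lambda>c. \<Sum>v\<in>?L. c v) ?Pi)"
    by simp
  also have "\<dots> = (\<integral>\<^sup>+k. F k \<partial>conv_pow (offspring_pmf p) (gen h t))"
    using map_sum_Pi_pmf[OF finL, of "offspring_pmf p"] by (simp add: gen_def)
  finally show ?thesis .
qed

lemma emeasure_restr_gen_GW: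
  assumes gw: "is_GW_tree M T p" and od: "offspring_dist p"
    and tree: "is_tree t" and height: "height_le t h"
  shows "emeasure M {\<omega>\<in>space M. restr h (T \<omega>) = t \<and> gen (h + m) (T \<omega>) = a}
      = ennreal (gw_prob p h t * pmf (gw_pmf (offspring_pmf p) m (gen h t)) a)"
  using tree height
proof (induction m arbitrary: h t)
  case 0
  interpret prob_space M using is_GW_treeD(1)[OF gw] .
  have "{\<omega>\<in>space M. restr h (T \<omega>) = t \<and> gen (h + 0) (T \<omega>) = a}
      = (if gen h t = a then {\<omega>\<in>space M. restr h (T \<omega>) = t} else {})"
    using gen_restr[of h h] by auto
  then show ?case
    using measure_restr_GW[OF gw 0] is_GW_treeD(3)[OF gw] gw_prob_nonneg[OF od]
    by (simp add: emeasure_eq_measure)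
next
  case (Suc m)
  let ?P = "offspring_pmf p"
  have "emeasure M {\<omega>\<in>space M. restr h (T \<omega>) = t \<and> gen (h + Suc m) (T \<omega>) = a}
    = (\<integral>\<^sup>+s. emeasure M {\<omega>\<in>space M. restr (Suc h) (T \<omega>) = s \<and> gen (Suc h + m) (T \<omega>) = a}
         \<partial>count_space {s. is_tree s \<and> height_le s (Suc h) \<and> restr h s = t})"
    using emeasure_restr_gen_split[OF gw, where h=h and n="h + Suc m"] by simp
  also have "\<dots> = (\<integral>\<^sup>+s. ennreal (gw_prob p (Suc h) s) * ennreal (pmf (gw_pmf ?P m (gen (Suc h) s)) a)
         \<partial>count_space {s. is_tree s \<and> height_le s (Suc h) \<and> restr h s = t})"
  proof (intro nn_integral_cong)
    fix s assume "s \<in> space (count_space {s. is_tree s \<and> height_le s (Suc h) \<and> restr h s = t})"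
    then show "emeasure M {\<omega>\<in>space M. restr (Suc h) (T \<omega>) = s \<and> gen (Suc h + m) (T \<omega>) = a}
        = ennreal (gw_prob p (Suc h) s) * ennreal (pmf (gw_pmf ?P m (gen (Suc h) s)) a)"
      using Suc.IH[of s "Suc h"] gw_prob_nonneg[OF od] by (simp add: ennreal_mult)
  qed
  also have "\<dots> = ennreal (gw_prob p h t) * (\<integral>\<^sup>+k. pmf (gw_pmf ?P m k) a \<partial>conv_pow ?P (gen h t))"
    by (rule nn_integral_extensions[OF od Suc.prems])
  also have "\<dots> = ennreal (gw_prob p h t * pmf (gw_pmf ?P (Suc m) (gen h t)) a)"
    using gw_prob_nonneg[OF od] by (simp add: ennreal_pmf_bind ennreal_mult)
  finally show ?case .
qed

lemma measure_restr_gen_GW: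
  assumes "is_GW_tree M T p" "offspring_dist p" "is_tree t" "height_le t h"
  shows "measure M {\<omega>\<in>space M. restr h (T \<omega>) = t \<and> gen (h + m) (T \<omega>) = a}
      = gw_prob p h t * pmf (gw_pmf (offspring_pmf p) m (gen h t)) a"
  using emeasure_restr_gen_GW[OF assms, of m a] gw_prob_nonneg[OF assms(2), of h t]
  by (simp add: measure_def)

lemma measure_gen_GW:
  assumes gw: "is_GW_tree M T p" and od: "offspring_dist p"
  shows "measure M {\<omega>\<in>space M. gen m (T \<omega>) = a} = pmf (gw_pmf (offspring_pmf p) m 1) a"
proof -
  have "{\<omega>\<in>space M. gen m (T \<omega>) = a} = {\<omega>\<in>space M. restr 0 (T \<omega>) = {[]} \<and> gen (0 + m) (T \<omega>) = a}"
    using restr_0 is_GW_treeD(2)[OF gw] by auto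
  moreover have "height_le {[]} 0" by (simp add: height_le_def)
  ultimately show ?thesis
    using measure_restr_gen_GW[OF gw od is_tree_root, of 0 m a] by (simp add: gen_0_root)
qed

lemma kids_take_nonzero:
  assumes "is_tree t" "v \<in> t" "i < length v"
  shows "kids t (take i v) \<noteq> 0"
proof -
  have "take i v @ [v ! i] @ drop (Suc i) v \<in> t"
    using assms(2,3) by (simp add: Cons_nth_drop_Suc)
  then have child: "take i v @ [v ! i] \<in> t"
    using tree_prefix[OF assms(1), of "take i v @ [v ! i]"] by simp
  then have "take i v \<in> t" by (rule tree_prefix[OF assms(1)])
  then show ?thesis using child tree_child_iff[OF assms(1)] by fastforce
qed

text \<open>In the critical case the spine factor p*(k)/k equals p(k), so every spine of length h
  has the probability of t under the GW law.\<close>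

lemma measure_restr_spine_Kesten:
  assumes K: "is_Kesten_tree N Ts V p" and mean: "offspring_mean p = 1"
    and tree: "is_tree t" and height: "height_le t h" and v: "v \<in> t" "length v = h" and "1 \<le> h"
  shows "measure N {\<omega>\<in>space N. restr h (Ts \<omega>) = t \<and> spine (V \<omega>) h = v} = gw_prob p h t"
proof -
  have inner: "restr (h - 1) t = {u\<in>t. length u < h}"
    using \<open>1 \<le> h\<close> by (auto simp: restr_def)
  have "measure N {\<omega>\<in>space N. restr h (Ts \<omega>) = t \<and> spine (V \<omega>) h = v}
      = (\<Prod>u\<in>{u\<in>t. length u < h}.
           if u = take (length u) v then size_biased p (kids t u) * (1 / real (kids t u))
           else p (kids t u))"
    using K tree height v \<open>1 \<le> h\<close> unfolding is_Kesten_tree_def inner[symmetric] by blast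
  also have "\<dots> = gw_prob p h t"
    unfolding gw_prob_def
  proof (intro prod.cong refl)
    fix u assume u: "u \<in> {u\<in>t. length u < h}"
    show "(if u = take (length u) v then size_biased p (kids t u) * (1 / real (kids t u))
           else p (kids t u)) = p (kids t u)"
      using kids_take_nonzero[OF tree v(1), of "length u"] u v(2) mean
      by (auto simp: size_biased_def)
  qed
  finally show ?thesis .
qed

lemma measure_restr_Kesten:
  assumes K: "is_Kesten_tree N Ts V p" and mean: "offspring_mean p = 1"
    and tree: "is_tree t" and height: "height_le t h"
  shows "measure N {\<omega>\<in>space N. restr h (Ts \<omega>) = t} = real (gen h t) * gw_prob p h t"
proof (cases h)
  case 0
  interpret prob_space N using K by (simp add: is_Kesten_tree_def)
  have "t = {[]}" using tree_height_0[OF tree] height 0 by simp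
  moreover have "{\<omega>\<in>space N. restr h (Ts \<omega>) = {[]}} = space N"
    using K restr_0 0 by (auto simp: is_Kesten_tree_def)
  ultimately show ?thesis using 0 by (simp add: prob_space gen_0_root)
next
  case (Suc h')
  let ?L = "{v\<in>t. length v = h}"
  let ?A = "\<lambda>v. {\<omega>\<in>space N. restr h (Ts \<omega>) = t \<and> spine (V \<omega>) h = v}"
  interpret prob_space N using K by (simp add: is_Kesten_tree_def)
  have "{\<omega>\<in>space N. restr h (Ts \<omega>) = t} = (\<Union>v\<in>?L. ?A v)"
  proof (intro equalityI subsetI)
    fix \<omega> assume \<omega>: "\<omega> \<in> {\<omega>\<in>space N. restr h (Ts \<omega>) = t}"
    have "spine (V \<omega>) h \<in> Ts \<omega>" using K \<omega> by (simp add: is_Kesten_tree_def)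
    then have "spine (V \<omega>) h \<in> restr h (Ts \<omega>)" by (simp add: restr_def spine_def)
    then show "\<omega> \<in> (\<Union>v\<in>?L. ?A v)" using \<omega> by (auto simp: spine_def)
  qed auto
  then have "measure N {\<omega>\<in>space N. restr h (Ts \<omega>) = t} = measure N (\<Union>v\<in>?L. ?A v)"
    by simp
  also have "\<dots> = (\<Sum>v\<in>?L. measure N (?A v))"
    using finite_tree[OF tree height] K
    by (intro finite_measure_finite_Union) (auto simp: disjoint_family_on_def is_Kesten_tree_def)
  also have "\<dots> = (\<Sum>v\<in>?L. gw_prob p h t)"
    using measure_restr_spine_Kesten[OF K mean tree height] Suc by simp
  finally show ?thesis by (simp add: gen_def)
qed

section \<open>Asymptotics of the ratios\<close>

lemma weighted_deviation_bound:
  fixes w \<rho> :: "nat \<Rightarrow> real"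
  assumes w: "\<And>k. 0 \<le> w k" "\<And>k. w k \<le> 1"
    and low: "\<And>k. k < K \<Longrightarrow> real k - \<delta> \<le> \<rho> k" and tot: "(\<Sum>k<K. w k * \<rho> k) \<le> 1"
    and "k0 < K" "0 \<le> \<delta>"
  shows "w k0 * (\<rho> k0 - real k0) \<le> 1 - (\<Sum>k<K. real k * w k) + \<delta> * real K"
proof -
  have "w k0 * (\<rho> k0 - real k0) \<le> w k0 * (\<rho> k0 - (real k0 - \<delta>))"
    using w \<open>0 \<le> \<delta>\<close> by (intro mult_left_mono) auto
  also have "\<dots> \<le> (\<Sum>k<K. w k * (\<rho> k - (real k - \<delta>)))"
    using \<open>k0 < K\<close> low w by (intro member_le_sum mult_nonneg_nonneg) auto
  also have "\<dots> = (\<Sum>k<K. w k * \<rho> k) - (\<Sum>k<K. real k * w k) + \<delta> * (\<Sum>k<K. w k)"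
    by (simp add: sum_subtractf sum.distrib sum_distrib_left algebra_simps)
  also have "\<dots> \<le> 1 - (\<Sum>k<K. real k * w k) + \<delta> * real K"
  proof -
    have "\<delta> * (\<Sum>k<K. w k) \<le> \<delta> * real K"
      using sum_mono[of "{..<K}" w "\<lambda>_. 1"] w(2) \<open>0 \<le> \<delta>\<close> by (intro mult_left_mono) auto
    then show ?thesis using tot by linarith
  qed
  finally show ?thesis .
qed

lemma tendsto_of_weighted_lower_bounds:
  fixes w :: "nat \<Rightarrow> real" and \<rho> :: "nat \<Rightarrow> nat \<Rightarrow> real"
  assumes w: "\<And>k. 0 \<le> w k" "\<And>k. w k \<le> 1" and mean: "(\<lambda>k. real k * w k) sums 1"
    and tot: "eventually (\<lambda>n. \<forall>K. (\<Sum>k<K. w k * \<rho> n k) \<le> 1) sequentially"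
    and low: "\<And>k \<epsilon>. \<epsilon> > 0 \<Longrightarrow> eventually (\<lambda>n. real k - \<epsilon> \<le> \<rho> n k) sequentially"
    and pos: "0 < w k0"
  shows "(\<lambda>n. \<rho> n k0) \<longlonglongrightarrow> real k0"
proof (rule tendstoI)
  fix e :: real assume "0 < e"
  define \<delta> where "\<delta> = e * w k0 / 3"
  have "0 < \<delta>" "\<delta> \<le> e / 3" using \<open>0 < e\<close> pos w(2)[of k0] by (auto simp: \<delta>_def)
  have "(\<lambda>K. \<Sum>k<K. real k * w k) \<longlonglongrightarrow> 1" using mean by (simp add: sums_def)
  from tendstoD[OF this \<open>0 < \<delta>\<close>] obtain K0 where K0: "\<And>K. K0 \<le> K \<Longrightarrow> dist (\<Sum>k<K. real k * w k) 1 < \<delta>"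
    by (auto simp: eventually_sequentially)
  define K where "K = max K0 (Suc k0)"
  have "k0 < K" "0 < K" by (auto simp: K_def)
  have mass: "1 - (\<Sum>k<K. real k * w k) < \<delta>" using K0[of K] by (auto simp: K_def dist_real_def)
  define \<delta>' where "\<delta>' = \<delta> / real K"
  have \<delta>': "0 < \<delta>'" "\<delta>' \<le> \<delta>" "\<delta>' * real K = \<delta>"
    using \<open>0 < \<delta>\<close> \<open>0 < K\<close> by (auto simp: \<delta>'_def field_simps)
  have "eventually (\<lambda>n. \<forall>k\<in>{..<K}. real k - \<delta>' \<le> \<rho> n k) sequentially"
    using low \<delta>' by (intro eventually_ball_finite) auto
  then show "eventually (\<lambda>n. dist (\<rho> n k0) (real k0) < e) sequentially"
    using tot
  proof eventually_elim
    case (elim n)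
    then have "w k0 * (\<rho> n k0 - real k0) \<le> 1 - (\<Sum>k<K. real k * w k) + \<delta>' * real K"
      using \<open>k0 < K\<close> \<delta>' by (intro weighted_deviation_bound w) auto
    also have "\<dots> < w k0 * (e * 2 / 3)"
      using mass \<delta>'(3) by (simp add: \<delta>_def)
    finally have "\<rho> n k0 - real k0 < e * 2 / 3"
      by (rule mult_less_cancel_left_pos[OF pos, THEN iffD1])
    moreover have "real k0 - \<delta>' \<le> \<rho> n k0"
      using elim \<open>k0 < K\<close> by simp
    then have "real k0 - \<rho> n k0 \<le> e / 3"
      using \<delta>' \<open>\<delta> \<le> e / 3\<close> by linarith
    ultimately show ?case using \<open>0 < e\<close> by (simp add: dist_real_def abs_less_iff)
  qed
qed

lemma gw_pmf_mean_sums: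
  fixes P :: "nat pmf"
  assumes "(\<integral>\<^sup>+x. real x \<partial>P) = 1"
  shows "(\<lambda>k. real k * pmf (gw_pmf P h 1) k) sums 1"
proof -
  have "(\<Sum>k. ennreal (real k * pmf (gw_pmf P h 1) k)) = ennreal 1"
    using nn_integral_gw_pmf[OF assms, of h 1]
    by (simp add: nn_integral_measure_pmf nn_integral_count_space_nat ennreal_mult' mult.commute)
  then have "(\<lambda>k. ennreal (real k * pmf (gw_pmf P h 1) k)) sums ennreal 1"
    using summable_sums[OF summableI, of "\<lambda>k. ennreal (real k * pmf (gw_pmf P h 1) k)"] by simp
  then show ?thesis by (subst (asm) sums_ennreal) auto
qed

text \<open>Markov property at time h, truncated to the first K population sizes.\<close>

lemma sum_pmf_gw_pmf_le:
  fixes P :: "nat pmf"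
  shows "(\<Sum>k<K. pmf (gw_pmf P h 1) k * pmf (gw_pmf P m k) a) \<le> pmf (gw_pmf P (h + m) 1) a"
proof -
  let ?f = "\<lambda>k. pmf (gw_pmf P h 1) k * pmf (gw_pmf P m k) a"
  have "ennreal (\<Sum>k<K. ?f k) = (\<Sum>k<K. ennreal (?f k))" by simp
  also have "\<dots> \<le> (\<Sum>k. ennreal (?f k))" by (intro sum_le_suminf summableI) auto
  also have "\<dots> = ennreal (pmf (gw_pmf P (h + m) 1) a)"
    by (simp add: gw_pmf_plus ennreal_pmf_bind nn_integral_measure_pmf nn_integral_count_space_nat
        ennreal_mult')
  finally show ?thesis by simp
qed

lemma gw_ratio_shift_tendsto:
  fixes P :: "nat pmf" and \<alpha> :: "nat \<Rightarrow> nat"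
  assumes ratio: "\<And>j. 1 \<le> j \<Longrightarrow>
      (\<lambda>n. pmf (gw_pmf P (n - j) 1) (\<alpha> n) / pmf (gw_pmf P n 1) (\<alpha> n)) \<longlonglongrightarrow> 1"
  shows "(\<lambda>n. pmf (gw_pmf P (n - h) 1) (\<alpha> n) / pmf (gw_pmf P n 1) (\<alpha> n)) \<longlonglongrightarrow> 1"
proof (cases "h = 0")
  case True
  have "eventually (\<lambda>n. 0 < pmf (gw_pmf P (n - 1) 1) (\<alpha> n) / pmf (gw_pmf P n 1) (\<alpha> n)) sequentially"
    using ratio[of 1] by (intro order_tendstoD) auto
  then have "eventually (\<lambda>n. pmf (gw_pmf P (n - h) 1) (\<alpha> n) / pmf (gw_pmf P n 1) (\<alpha> n) = 1) sequentially"
    by eventually_elim (auto simp: True)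
  then show ?thesis by (rule tendsto_eventually)
qed (use ratio in simp)

lemma eventually_gw_ratio_ge:
  fixes P :: "nat pmf" and \<alpha> :: "nat \<Rightarrow> nat"
  assumes mean: "(\<integral>\<^sup>+x. real x \<partial>P) = 1" and nondeg: "pmf P 0 + pmf P 1 < 1"
    and \<alpha>: "\<And>n. 1 \<le> \<alpha> n"
    and ratio: "\<And>j. 1 \<le> j \<Longrightarrow>
      (\<lambda>n. pmf (gw_pmf P (n - j) 1) (\<alpha> n) / pmf (gw_pmf P n 1) (\<alpha> n)) \<longlonglongrightarrow> 1"
    and "0 < \<epsilon>"
  shows "eventually (\<lambda>n. real k - \<epsilon> \<le> pmf (gw_pmf P (n - h) k) (\<alpha> n) / pmf (gw_pmf P n 1) (\<alpha> n))
           sequentially"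
proof -
  define D where "D n = pmf (gw_pmf P n 1) (\<alpha> n)" for n
  define r where "r n = pmf (gw_pmf P (n - h) 1) (\<alpha> n) / D n" for n
  define z where "z n = pmf (gw_pmf P (n - h) 1) 0" for n
  have "r \<longlonglongrightarrow> 1"
    unfolding r_def[abs_def] D_def by (rule gw_ratio_shift_tendsto[OF ratio])
  moreover have "z \<longlonglongrightarrow> 1"
    unfolding z_def
  proof (rule LIMSEQ_offset[where k=h])
    show "(\<lambda>n. pmf (gw_pmf P (n + h - h) 1) 0) \<longlonglongrightarrow> 1"
      using gw_extinction[OF mean nondeg] by simp
  qed
  ultimately have "(\<lambda>n. real k * r n * z n ^ (k - 1)) \<longlonglongrightarrow> real k * 1 * 1 ^ (k - 1)"
    by (intro tendsto_intros)
  then have "eventually (\<lambda>n. real k - \<epsilon> < real k * r n * z n ^ (k - 1)) sequentially"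
    using \<open>0 < \<epsilon>\<close> by (intro order_tendstoD) auto
  then show ?thesis
  proof eventually_elim
    case (elim n)
    have "real k * r n * z n ^ (k - 1) = real k * pmf (gw_pmf P (n - h) 1) (\<alpha> n) * z n ^ (k - 1) / D n"
      by (simp add: r_def)
    also have "\<dots> \<le> pmf (gw_pmf P (n - h) k) (\<alpha> n) / D n"
      unfolding z_def using \<alpha>[of n] by (intro divide_right_mono pmf_gw_pmf_lower) (auto simp: D_def)
    finally show ?case using elim by (simp add: D_def)
  qed
qed

lemma gw_ratio_tendsto:
  fixes P :: "nat pmf" and \<alpha> :: "nat \<Rightarrow> nat"
  assumes mean: "(\<integral>\<^sup>+x. real x \<partial>P) = 1" and nondeg: "pmf P 0 + pmf P 1 < 1"
    and \<alpha>: "\<And>n. 1 \<le> \<alpha> n"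
    and ratio: "\<And>j. 1 \<le> j \<Longrightarrow>
      (\<lambda>n. pmf (gw_pmf P (n - j) 1) (\<alpha> n) / pmf (gw_pmf P n 1) (\<alpha> n)) \<longlonglongrightarrow> 1"
    and pos: "0 < pmf (gw_pmf P h 1) k0"
  shows "(\<lambda>n. pmf (gw_pmf P (n - h) k0) (\<alpha> n) / pmf (gw_pmf P n 1) (\<alpha> n)) \<longlonglongrightarrow> real k0"
proof (rule tendsto_of_weighted_lower_bounds[where w = "pmf (gw_pmf P h 1)"
      and \<rho> = "\<lambda>n k. pmf (gw_pmf P (n - h) k) (\<alpha> n) / pmf (gw_pmf P n 1) (\<alpha> n)"])
  show "eventually (\<lambda>n. \<forall>K. (\<Sum>k<K. pmf (gw_pmf P h 1) k *
          (pmf (gw_pmf P (n - h) k) (\<alpha> n) / pmf (gw_pmf P n 1) (\<alpha> n))) \<le> 1) sequentially"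
    using eventually_ge_at_top[of h]
  proof eventually_elim
    case (elim n)
    let ?D = "pmf (gw_pmf P n 1) (\<alpha> n)"
    show ?case
    proof
      fix K
      have "(\<Sum>k<K. pmf (gw_pmf P h 1) k * (pmf (gw_pmf P (n - h) k) (\<alpha> n) / ?D))
          = (\<Sum>k<K. pmf (gw_pmf P h 1) k * pmf (gw_pmf P (n - h) k) (\<alpha> n)) / ?D"
        by (simp add: sum_divide_distrib)
      also have "\<dots> \<le> ?D / ?D"
        using sum_pmf_gw_pmf_le[where K=K and h=h and m="n - h" and a="\<alpha> n"] elim
        by (intro divide_right_mono) auto
      also have "\<dots> \<le> 1" by (cases "?D = 0") auto
      finally show "(\<Sum>k<K. pmf (gw_pmf P h 1) k * (pmf (gw_pmf P (n - h) k) (\<alpha> n) / ?D)) \<le> 1" .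
    qed
  qed
qed (use eventually_gw_ratio_ge[OF mean nondeg \<alpha> ratio] gw_pmf_mean_sums[OF mean] pos
     in \<open>auto simp: pmf_le_1\<close>)

lemma conditional_restr_GW:
  assumes gw: "is_GW_tree M T p" and od: "offspring_dist p"
    and tree: "is_tree t" and height: "height_le t h" and "h \<le> n"
  shows "measure M {\<omega>\<in>space M. restr h (T \<omega>) = t \<and> gen n (T \<omega>) = a}
           / measure M {\<omega>\<in>space M. gen n (T \<omega>) = a}
       = gw_prob p h t * (pmf (gw_pmf (offspring_pmf p) (n - h) (gen h t)) a
           / pmf (gw_pmf (offspring_pmf p) n 1) a)"
  using measure_restr_gen_GW[OF gw od tree height, of "n - h" a] \<open>h \<le> n\<close>
  by (simp add: measure_gen_GW[OF gw od])

lemma gw_prob_le_pmf_gen: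
  assumes gw: "is_GW_tree M T p" and od: "offspring_dist p"
    and tree: "is_tree t" and height: "height_le t h"
  shows "gw_prob p h t \<le> pmf (gw_pmf (offspring_pmf p) h 1) (gen h t)"
proof -
  interpret prob_space M using is_GW_treeD(1)[OF gw] .
  have "{\<omega>\<in>space M. restr h (T \<omega>) = t} \<subseteq> {\<omega>\<in>space M. gen h (T \<omega>) = gen h t}"
    using gen_restr[of h h] by auto
  then have "measure M {\<omega>\<in>space M. restr h (T \<omega>) = t} \<le> measure M {\<omega>\<in>space M. gen h (T \<omega>) = gen h t}"
    using is_GW_treeD(4)[OF gw] by (intro finite_measure_mono) auto
  then show ?thesis
    using measure_restr_GW[OF gw tree height] measure_gen_GW[OF gw od] by simp
qed

lemma tendsto_conditional_restr_GW:
  assumes gw: "is_GW_tree M T p" and od: "offspring_dist p" and crit: "offspring_mean p = 1"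
    and \<alpha>: "\<And>n. 1 \<le> \<alpha> n"
    and ratio_GW: "\<And>j. 1 \<le> j \<Longrightarrow>
           (\<lambda>n. measure M {\<omega>\<in>space M. gen (n - j) (T \<omega>) = \<alpha> n}
                / measure M {\<omega>\<in>space M. gen n (T \<omega>) = \<alpha> n}) \<longlonglongrightarrow> 1"
    and tree: "is_tree t" and height: "height_le t h"
  shows "(\<lambda>n. measure M {\<omega>\<in>space M. restr h (T \<omega>) = t \<and> gen n (T \<omega>) = \<alpha> n}
           / measure M {\<omega>\<in>space M. gen n (T \<omega>) = \<alpha> n})
         \<longlonglongrightarrow> real (gen h t) * gw_prob p h t"
proof -
  let ?P = "offspring_pmf p" and ?Q = "gw_prob p h t"
  let ?\<rho> = "\<lambda>n. pmf (gw_pmf ?P (n - h) (gen h t)) (\<alpha> n) / pmf (gw_pmf ?P n 1) (\<alpha> n)"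
  have mean: "(\<integral>\<^sup>+x. real x \<partial>?P) = 1" by (rule nn_integral_offspring_pmf[OF od crit])
  have nondeg: "pmf ?P 0 + pmf ?P 1 < 1" using od by (simp add: pmf_offspring_pmf offspring_dist_def)
  have ratio: "\<And>j. 1 \<le> j \<Longrightarrow> (\<lambda>n. pmf (gw_pmf ?P (n - j) 1) (\<alpha> n) / pmf (gw_pmf ?P n 1) (\<alpha> n)) \<longlonglongrightarrow> 1"
    using ratio_GW by (simp add: measure_gen_GW[OF gw od])
  have lim: "(\<lambda>n. ?Q * ?\<rho> n) \<longlonglongrightarrow> real (gen h t) * ?Q"
  proof (cases "?Q = 0")
    case False
    then have pos: "0 < pmf (gw_pmf ?P h 1) (gen h t)"
      using gw_prob_le_pmf_gen[OF gw od tree height] gw_prob_nonneg[OF od, of h t] by linarith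
    have "?\<rho> \<longlonglongrightarrow> real (gen h t)"
      by (rule gw_ratio_tendsto[OF mean nondeg \<alpha>]) (fact ratio, fact pos)
    from tendsto_mult_left[OF this, of ?Q] show ?thesis by (simp add: mult.commute)
  qed simp
  have "eventually (\<lambda>n. ?Q * ?\<rho> n = measure M {\<omega>\<in>space M. restr h (T \<omega>) = t \<and> gen n (T \<omega>) = \<alpha> n}
         / measure M {\<omega>\<in>space M. gen n (T \<omega>) = \<alpha> n}) sequentially"
    using eventually_ge_at_top[of h]
    by eventually_elim (rule conditional_restr_GW[OF gw od tree height, symmetric])
  from Lim_transform_eventually[OF lim this] show ?thesis .
qed

theorem proposition6p1:
  fixes M :: "'a measure" and T :: "'a \<Rightarrow> tree"
    and N :: "'b measure" and Ts :: "'b \<Rightarrow> tree" and V :: "'b \<Rightarrow> nat \<Rightarrow> nat"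
    and p :: "nat \<Rightarrow> real" and \<alpha> :: "nat \<Rightarrow> nat"
  assumes "offspring_dist p"
    and "offspring_mean p = 1"
    and "is_GW_tree M T p"
    and "is_Kesten_tree N Ts V p"
    and "\<And>n. 1 \<le> \<alpha> n"
    and "\<And>j. 1 \<le> j \<Longrightarrow>
           (\<lambda>n. measure M {\<omega>\<in>space M. gen (n - j) (T \<omega>) = \<alpha> n}
                / measure M {\<omega>\<in>space M. gen n (T \<omega>) = \<alpha> n}) \<longlonglongrightarrow> 1"
  shows "\<forall>h t. is_tree t \<longrightarrow>
           (\<lambda>n. measure M {\<omega>\<in>space M. restr h (T \<omega>) = t \<and> gen n (T \<omega>) = \<alpha> n}
                / measure M {\<omega>\<in>space M. gen n (T \<omega>) = \<alpha> n})
           \<longlonglongrightarrow> measure N {\<omega>\<in>space N. restr h (Ts \<omega>) = t}"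
proof (intro allI impI)
  fix h t assume tree: "is_tree t"
  show "(\<lambda>n. measure M {\<omega>\<in>space M. restr h (T \<omega>) = t \<and> gen n (T \<omega>) = \<alpha> n}
           / measure M {\<omega>\<in>space M. gen n (T \<omega>) = \<alpha> n})
        \<longlonglongrightarrow> measure N {\<omega>\<in>space N. restr h (Ts \<omega>) = t}"
  proof (cases "height_le t h")
    case True
    with tree show ?thesis
      using tendsto_conditional_restr_GW[OF assms(3,1,2,5,6)] measure_restr_Kesten[OF assms(4,2)]
      by simp
  next
    case False
    then have "restr h s \<noteq> t" for s using height_le_restr[of h s] by auto
    then show ?thesis by simp
  qed
qed

end
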